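(* Let $k\ge2$ and $n\le-(k-1)$. Then $$\mathcal{F}_{n,k}(x)=\sum_{t=0}^{\lfloor(|n|+1-k)/k\rfloor}C_k\bigl(-(1+t),\,|n|+1-k(1+t)\bigr)\,x^{|n|+1-k(1+t)}.$$
   Context: For $k\ge2$, the polynomials $\mathcal{F}_{n,k}(x)\in\mathbb{Z}[x]$ ($n\in\mathbb{Z}$) are defined by $\mathcal{F}_{1,k}=1$, $\mathcal{F}_{n,k}=0$ for $n=0,-1,\dots,-(k-2)$, and $\mathcal{F}_{n,k}(x)=\sum_{j=1}^{k}x^{k-j}\mathcal{F}_{n-j,k}(x)$ for all $n\in\mathbb{Z}$. This recurrence is used upwards for $n\ge2$, and downwards for $n\le-(k-1)$ as $\mathcal{F}_{n,k}=\mathcal{F}_{n+k,k}-\sum_{j=1}^{k-1}x^j\mathcal{F}_{n+j,k}$. For integers $m<0$ and $j\ge0$, $C_k(m,j)$ denotes the coefficient of $x^j$ in the formal power series $(1+x+\dots+x^{k-1})^{m}=1/(1+x+\dots+x^{k-1})^{|m|}$. *)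

theory Defs
  imports "HOL-Computational_Algebra.Polynomial" "HOL-Computational_Algebra.Formal_Power_Series"
begin

text \<open>Upward part: Fup k m = F_{m+1,k} for m >= 0, using
  F_{n,k} = sum_{j=1..k} x^(k-j) F_{n-j,k} and F_{n,k} = 0 for -(k-2) <= n <= 0.\<close>
fun Fup :: "nat \<Rightarrow> nat \<Rightarrow> int poly" where
  "Fup k m = (if m = 0 then 1 else
     (\<Sum>j\<in>{1..k}. if j \<le> m then monom 1 (k - j) * Fup k (m - j) else 0))"

text \<open>Downward part: Fneg k i = F_{1-i,k} for i >= 0, using
  F_{n,k} = F_{n+k,k} - sum_{j=1..k-1} x^j F_{n+j,k} for n <= -(k-1). (The k = 0 guard is only for termination; k >= 2 throughout.)\<close>
fun Fneg :: "nat \<Rightarrow> nat \<Rightarrow> int poly" where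
  "Fneg k i = (if i = 0 then 1 else if i < k \<or> k = 0 then 0 else
     Fneg k (i - k) - (\<Sum>j\<in>{1..k-1}. monom 1 j * Fneg k (i - j)))"

definition F :: "nat \<Rightarrow> int \<Rightarrow> int poly" where
  "F k n = (if n \<ge> 1 then Fup k (nat (n - 1)) else Fneg k (nat (1 - n)))"

definition C :: "nat \<Rightarrow> int \<Rightarrow> nat \<Rightarrow> rat" where
  "C k m j = fps_nth (inverse ((\<Sum>i<k. fps_X ^ i) ^ nat (- m))) j"

end

theory Submission
  imports Defs
begin

text \<open>Let \<open>P = 1 + x + \<dots> + x^(k-1)\<close>. Read coefficientwise, the identity
  \<open>P \<cdot> P^-(t+1) = P^-t\<close> is exactly the downward recurrence for \<open>F_{1-i,k}\<close>, taken along
  the diagonal \<open>i - e = k t\<close> of its coefficient array (\<open>e\<close> the exponent of \<open>x\<close>). So by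
  strong induction on \<open>i\<close>, the coefficient of \<open>x^e\<close> in \<open>F_{1-i,k}\<close> is \<open>C_k(-t, e)\<close> if
  \<open>i - e = k t\<close> and \<open>0\<close> otherwise. The diagonal \<open>t = 0\<close> only contributes to \<open>F_{1,k}\<close>.\<close>

lemma fps_inverse_power_Suc_conv:
  fixes f :: "'a::field fps"
  assumes "fps_nth f 0 \<noteq> 0"
  shows "(\<Sum>j=0..m. fps_nth f j * fps_nth (inverse (f ^ Suc t)) (m - j))
    = fps_nth (inverse (f ^ t)) m"
proof -
  have "f * inverse (f ^ Suc t) = (f * inverse f) * inverse (f ^ t)"
    using assms by (simp add: fps_inverse_mult mult.assoc)
  also have "\<dots> = inverse (f ^ t)"
    using assms by (simp add: inverse_mult_eq_1')
  finally show ?thesis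
    by (metis fps_mult_nth)
qed

definition repunit_fps :: "nat \<Rightarrow> rat fps" where
  "repunit_fps k = (\<Sum>i<k. fps_X ^ i)"

lemma repunit_fps_nth: "fps_nth (repunit_fps k) j = (if j < k then 1 else 0)"
  by (simp add: repunit_fps_def fps_sum_nth fps_X_power_nth)

lemma C_neg_nat: "C k (- int t) m = fps_nth (inverse (repunit_fps k ^ t)) m"
  by (simp add: C_def repunit_fps_def)

lemma inverse_repunit_power_recurrence:
  assumes "k \<ge> 1"
  shows "(\<Sum>j<k. if j \<le> m then fps_nth (inverse (repunit_fps k ^ Suc t)) (m - j) else 0)
    = fps_nth (inverse (repunit_fps k ^ t)) m"
proof -
  define g where "g j = fps_nth (inverse (repunit_fps k ^ Suc t)) (m - j)" for j
  have "(\<Sum>j<k. if j \<le> m then g j else 0) = (\<Sum>j\<in>{..<k} \<inter> {..m}. g j)"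
    by (subst sum.inter_restrict) auto
  also have "\<dots> = (\<Sum>j=0..m. fps_nth (repunit_fps k) j * g j)"
    by (subst Int_commute, subst sum.inter_restrict)
      (auto simp: atLeast0AtMost repunit_fps_nth intro!: sum.cong)
  also have "\<dots> = fps_nth (inverse (repunit_fps k ^ t)) m"
    unfolding g_def using assms by (intro fps_inverse_power_Suc_conv) (simp add: repunit_fps_nth)
  finally show ?thesis unfolding g_def .
qed

definition Fneg_coeff :: "nat \<Rightarrow> nat \<Rightarrow> nat \<Rightarrow> rat" where
  "Fneg_coeff k i e =
    (if e \<le> i \<and> k dvd (i - e) then fps_nth (inverse (repunit_fps k ^ ((i - e) div k))) e else 0)"

lemma Fneg_coeff_recurrence:
  assumes "1 \<le> k" "k \<le> i"
  shows "(\<Sum>j<k. if j \<le> e then Fneg_coeff k (i - j) (e - j) else 0) = Fneg_coeff k (i - k) e"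
proof (cases "e \<le> i \<and> k dvd (i - e)")
  case True
  then obtain t where t: "i - e = k * t" "e \<le> i" by blast
  have "(\<Sum>j<k. if j \<le> e then Fneg_coeff k (i - j) (e - j) else 0)
      = (\<Sum>j<k. if j \<le> e then fps_nth (inverse (repunit_fps k ^ t)) (e - j) else 0)"
    using t assms by (intro sum.cong) (auto simp: Fneg_coeff_def)
  also have "\<dots> = Fneg_coeff k (i - k) e"
  proof (cases t)
    case 0
    then show ?thesis
      using t assms by (auto simp: Fneg_coeff_def intro!: sum.neutral)
  next
    case (Suc s)
    have "i - k - e = k * s" "e \<le> i - k" using t Suc by (simp_all add: algebra_simps)
    then have "Fneg_coeff k (i - k) e = fps_nth (inverse (repunit_fps k ^ s)) e"
      using assms by (simp add: Fneg_coeff_def)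
    then show ?thesis
      using assms by (simp only: \<open>t = Suc s\<close> inverse_repunit_power_recurrence)
  qed
  finally show ?thesis .
next
  case False
  have "\<not> (e \<le> i - k \<and> k dvd (i - k - e))"
  proof
    assume shifted: "e \<le> i - k \<and> k dvd (i - k - e)"
    then have "i - e = (i - k - e) + k" using assms by arith
    with shifted False show False by auto
  qed
  with False show ?thesis
    using assms by (auto simp: Fneg_coeff_def intro!: sum.neutral)
qed

declare Fneg.simps [simp del]

lemma coeff_Fneg:
  assumes "k \<ge> 1"
  shows "of_int (coeff (Fneg k i) e) = Fneg_coeff k i e"
proof (induction i arbitrary: e rule: less_induct)
  case (less i)
  consider "i = 0" | "0 < i" "i < k" | "k \<le> i" by linarith
  then show ?case
  proof cases
    case 1
    then show ?thesis by (simp add: Fneg.simps Fneg_coeff_def)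
  next
    case 2
    then have "Fneg_coeff k i e = 0"
      by (auto simp: Fneg_coeff_def elim!: dvdE)
    with 2 show ?thesis by (simp add: Fneg.simps)
  next
    case 3
    have Fneg_i: "Fneg k i = Fneg k (i - k) - (\<Sum>j\<in>{1..k-1}. monom 1 j * Fneg k (i - j))"
      using 3 assms by (subst Fneg.simps) simp
    have "of_int (coeff (Fneg k i) e) = of_int (coeff (Fneg k (i - k)) e)
        - (\<Sum>j\<in>{1..k-1}. if j \<le> e then of_int (coeff (Fneg k (i - j)) (e - j)) else 0)"
      unfolding Fneg_i coeff_diff coeff_sum coeff_monom_mult of_int_diff of_int_sum
      by (auto intro!: sum.cong)
    also have "\<dots> = Fneg_coeff k (i - k) e
        - (\<Sum>j\<in>{1..k-1}. if j \<le> e then Fneg_coeff k (i - j) (e - j) else 0)"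
      using 3 assms by (auto simp: less.IH intro!: sum.cong)
    also have "\<dots> = Fneg_coeff k i e"
    proof -
      have "{..<k} = insert 0 {1..k-1}" using assms by auto
      then show ?thesis
        using Fneg_coeff_recurrence[of k i e] 3 assms by simp
    qed
    finally show ?thesis .
  qed
qed

lemma Fneg_eq_sum:
  assumes "k \<ge> 1"
  shows "map_poly of_int (Fneg k i)
    = (\<Sum>t = 0..i div k. monom (C k (- int t) (i - k * t)) (i - k * t))"
proof (rule poly_eqI)
  fix e
  have diagonal: "e = i - k * t \<longleftrightarrow> e \<le> i \<and> k dvd (i - e) \<and> t = (i - e) div k"
    if "t \<in> {0..i div k}" for t
  proof -
    have "k * t \<le> i" using that by (metis atLeastAtMost_iff div_times_less_eq_dividend
          le_trans mult.commute mult_le_mono2)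
    then show ?thesis using assms by auto
  qed
  have "coeff (\<Sum>t = 0..i div k. monom (C k (- int t) (i - k * t)) (i - k * t)) e
      = (\<Sum>t = 0..i div k. if e = i - k * t then C k (- int t) e else 0)"
    by (auto simp: coeff_sum coeff_monom intro!: sum.cong)
  also have "\<dots> = (\<Sum>t = 0..i div k.
      if e \<le> i \<and> k dvd (i - e) \<and> t = (i - e) div k then C k (- int t) e else 0)"
    using diagonal by (intro sum.cong) simp_all
  also have "\<dots> = Fneg_coeff k i e"
  proof (cases "e \<le> i \<and> k dvd (i - e)")
    case True
    then show ?thesis
      using div_le_mono[of "i - e" i k] by (simp add: Fneg_coeff_def C_neg_nat)
  qed (auto simp: Fneg_coeff_def intro!: sum.neutral)
  finally show "coeff (map_poly of_int (Fneg k i)) e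
      = coeff (\<Sum>t = 0..i div k. monom (C k (- int t) (i - k * t)) (i - k * t)) e"
    using coeff_Fneg[OF assms] by (simp add: coeff_map_poly)
qed

theorem mainTheorem9:
  fixes k :: nat and n :: int
  assumes "k \<ge> 2" and "n \<le> - (int k - 1)"
  shows "map_poly (of_int :: int \<Rightarrow> rat) (F k n) =
    (\<Sum>t = 0..(nat \<bar>n\<bar> + 1 - k) div k.
        monom (C k (- (1 + int t)) (nat \<bar>n\<bar> + 1 - k * (1 + t))) (nat \<bar>n\<bar> + 1 - k * (1 + t)))"
proof -
  define i where "i = nat \<bar>n\<bar> + 1"
  have "k \<le> i" using assms unfolding i_def by linarith
  then have div_i: "i div k = Suc ((i - k) div k)"
    using assms le_div_geq[of k i] by simp
  have C_zero_i: "C k 0 i = 0" unfolding i_def by (simp add: C_def)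
  have "F k n = Fneg k i"
    unfolding F_def i_def using assms by (auto intro!: arg_cong[where f = "Fneg k"])
  then have "map_poly of_int (F k n)
      = (\<Sum>t = 0..Suc ((i - k) div k). monom (C k (- int t) (i - k * t)) (i - k * t))"
    using Fneg_eq_sum[of k i] assms(1) div_i by simp
  also have "\<dots> = (\<Sum>t = 0..(i - k) div k.
      monom (C k (- int (Suc t)) (i - k * Suc t)) (i - k * Suc t))"
    unfolding sum.atLeast0_atMost_Suc_shift by (simp add: C_zero_i)
  also have "\<dots> = (\<Sum>t = 0..(i - k) div k.
      monom (C k (- (1 + int t)) (i - k * (1 + t))) (i - k * (1 + t)))"
    by simp
  finally show ?thesis unfolding i_def .
qed

end
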